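(* Let $E\subset\mathbb N$ with $\Phi_E$ regular, conformal measure $\mu$ and conformal dimension $\delta$, and assume $\#(E\cap[N,2N])\asymp f(N)$ where $f$ is regularly varying with exponent $s<2\delta$. Then for all sufficiently small $r>0$, $\mu(B(0,r))\asymp r^{2\delta}f(r^{-1})$. Moreover, for $a\in E$ and $a^{-1}\le r\le1$ (with $r$ sufficiently small), $\mu(B([a],r))\asymp r^{2\delta}f(r^{-1})$.
   Context: $\phi_a(x)=1/(a+x)$; $\phi_\omega=\phi_{\omega_1}\circ\cdots\circ\phi_{\omega_{|\omega|}}$; $\|\phi_\omega'\|=\sup_{[0,1]}|\phi_\omega'|$; $[a]=\phi_a([0,1])$. Regularity: the pressure $\mathrm P_E(s)=\lim_n\frac1n\log\sum_{\omega\in E^n}\|\phi_\omega'\|^s$ vanishes at $s=\delta$; $\mu$ is the unique Borel probability measure on $\Lambda_E$ (irrationals in $(0,1)$ with continued fraction entries in $E$) with $\mu(A)=\sum_{a\in E}\int_{\phi_a^{-1}(A)}|\phi_a'|^\delta d\mu$; in particular $\mu([a])\asymp a^{-2\delta}$. $f$ regularly varying with exponent $s$: $f(ax)/f(x)\to a^s$ for all $a>1$. $B([a],r)$ is the open $r$-neighbourhood of $[a]$. $\asymp$ means comparability up to multiplicative constants independent of $r$ and $a$. *)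

theory Defs
  imports "HOL-Probability.Probability"
begin

definition phi :: "nat \<Rightarrow> real \<Rightarrow> real" where
  "phi a x = 1 / (real a + x)"

definition phiw :: "nat list \<Rightarrow> real \<Rightarrow> real" where
  "phiw w = foldr (\<lambda>a g. phi a \<circ> g) w id"

definition dnorm :: "nat list \<Rightarrow> real" where
  "dnorm w = (SUP x\<in>{0..1}. \<bar>deriv (phiw w) x\<bar>)"

definition words :: "nat set \<Rightarrow> nat \<Rightarrow> nat list set" where
  "words E n = {w. length w = n \<and> set w \<subseteq> E}"

text \<open>The pressure P_E(s) = lim (1/n) log sum_{w in E^n} ||phi_w'||^s exists and equals 0
  (in particular all the sums are finite).\<close>
definition pressure_vanishes_at :: "nat set \<Rightarrow> real \<Rightarrow> bool" where
  "pressure_vanishes_at E s \<longleftrightarrow>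
     (\<forall>n. (\<lambda>w. dnorm w powr s) summable_on words E n) \<and>
     (\<lambda>n. ln (\<Sum>\<^sub>\<infinity>w\<in>words E n. dnorm w powr s) / real n) \<longlonglongrightarrow> 0"

definition gauss :: "real \<Rightarrow> real" where
  "gauss x = frac (1 / x)"

definition cf_digit :: "real \<Rightarrow> nat \<Rightarrow> nat" where
  "cf_digit x n = nat \<lfloor>1 / ((gauss ^^ n) x)\<rfloor>"

definition LambdaE :: "nat set \<Rightarrow> real set" where
  "LambdaE E = {x. 0 < x \<and> x < 1 \<and> x \<notin> \<rat> \<and> (\<forall>n. cf_digit x n \<in> E)}"

definition conformal_measure :: "nat set \<Rightarrow> real \<Rightarrow> real measure \<Rightarrow> bool" where
  "conformal_measure E \<delta> \<mu> \<longleftrightarrow>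
     sets \<mu> = sets borel \<and> prob_space \<mu> \<and> emeasure \<mu> (LambdaE E) = 1 \<and>
     (\<forall>A\<in>sets borel. emeasure \<mu> A =
        (\<integral>\<^sup>+ a. (\<integral>\<^sup>+ x\<in>(phi a -` A \<inter> {0..1}). ennreal (\<bar>deriv (phi a) x\<bar> powr \<delta>) \<partial>\<mu>)
          \<partial>count_space E))"

definition regularly_varying :: "(real \<Rightarrow> real) \<Rightarrow> real \<Rightarrow> bool" where
  "regularly_varying f s \<longleftrightarrow> f \<in> borel_measurable borel \<and>
     (\<forall>\<^sub>F x in at_top. f x > 0) \<and>
     (\<forall>a>1. ((\<lambda>x. f (a * x) / f x) \<longlongrightarrow> a powr s) at_top)"

definition cyl :: "nat \<Rightarrow> real set" where
  "cyl a = phi a ` {0..1}"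

definition nbhd :: "real set \<Rightarrow> real \<Rightarrow> real set" where
  "nbhd S r = (\<Union>x\<in>S. ball x r)"

end

theory Submission
  imports Defs
begin

text \<open>Conformality writes \<mu>(A) as a sum over the first digit a \<in> E of integrals of |\<phi>_a'|^\<delta>,
  which is comparable to a^(-2\<delta>) on [0,1], over the part of [0,1] that \<phi>_a maps into A.
  If (0,r) \<subseteq> A and A \<inter> (0,\<infinity>) \<subseteq> (0,2r), as for B(0,r) and for B([a],r) with 1/a \<le> r, this makes
  \<mu>(A) comparable to the tail of the series of b^(-2\<delta>) over b \<in> E with b of order at least 1/r.
  Grouped into dyadic blocks [N,2N], each contributing about f(N) N^(-2\<delta>), the tail is dominated by
  a geometric series because s < 2\<delta>, and so is comparable to r^(2\<delta>) f(1/r). Comparing f at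
  integers with f at arbitrary reals needs the uniform convergence theorem for the measurable
  regularly varying f, proved by a Steinhaus-type argument.\<close>

section \<open>Uniform convergence theorem for regularly varying functions\<close>

definition good_shifts :: "(real \<Rightarrow> real) \<Rightarrow> (nat \<Rightarrow> real) \<Rightarrow> nat \<Rightarrow> real set" where
  "good_shifts k x N = {v\<in>{0..2}. \<forall>n\<ge>N. \<bar>k (x n + v) - k (x n)\<bar> \<le> 1}"

lemma good_shifts_borel:
  assumes "k \<in> borel_measurable borel"
  shows "good_shifts k x N \<in> sets borel"
  unfolding good_shifts_def using assms by measurable

lemma good_shifts_lmeasurable:
  assumes "k \<in> borel_measurable borel"
  shows "good_shifts k x N \<in> lmeasurable"
proof (rule bounded_set_imp_lmeasurable)
  show "bounded (good_shifts k x N)"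
    by (rule bounded_subset[of "{0..2}"]) (auto simp: good_shifts_def)
  show "good_shifts k x N \<in> sets lebesgue"
    using good_shifts_borel[OF assms] by simp
qed

lemma eventually_measure_good_shifts:
  fixes k :: "real \<Rightarrow> real" and x :: "nat \<Rightarrow> real"
  assumes k_meas: "k \<in> borel_measurable borel"
    and k_incr: "\<And>u. u \<ge> 0 \<Longrightarrow> ((\<lambda>t. k (t + u) - k t) \<longlongrightarrow> 0) at_top"
    and x_ge: "\<And>n. x n \<ge> real n"
  shows "\<forall>\<^sub>F N in sequentially. measure lebesgue (good_shifts k x N) > 3/2"
proof -
  have x_lim: "filterlim x at_top sequentially"
    by (rule filterlim_at_top_mono[OF filterlim_real_sequentially]) (simp add: x_ge)
  have union: "(\<Union>N. good_shifts k x N) = {0..2}"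
  proof
    show "{0..2} \<subseteq> (\<Union>N. good_shifts k x N)"
    proof
      fix v :: real assume v: "v \<in> {0..2}"
      have "((\<lambda>n. k (x n + v) - k (x n)) \<longlongrightarrow> 0) sequentially"
        using k_incr[of v] v x_lim by (auto intro: filterlim_compose)
      then have "\<forall>\<^sub>F n in sequentially. dist (k (x n + v) - k (x n)) 0 < 1"
        by (rule tendstoD) simp
      then show "v \<in> (\<Union>N. good_shifts k x N)"
        using v by (auto simp: good_shifts_def eventually_sequentially dist_real_def intro: less_imp_le)
    qed
  qed (auto simp: good_shifts_def)
  have "(\<lambda>N. measure lebesgue (good_shifts k x N)) \<longlonglongrightarrow> measure lebesgue (\<Union>N. good_shifts k x N)"
  proof (rule Lim_measure_incseq)
    show "range (good_shifts k x) \<subseteq> sets lebesgue"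
      using good_shifts_lmeasurable[OF k_meas] by (auto simp: fmeasurable_def)
    show "incseq (good_shifts k x)"
      by (auto simp: incseq_def good_shifts_def)
    show "emeasure lebesgue (\<Union>N. good_shifts k x N) \<noteq> \<infinity>"
      by (simp add: union)
  qed
  then have "(\<lambda>N. measure lebesgue (good_shifts k x N)) \<longlonglongrightarrow> 2"
    by (simp add: union)
  then show ?thesis
    by (rule order_tendstoD) simp
qed

lemma lmeasurable_subsets_overlap:
  fixes a b :: real
  assumes "U \<in> sets lebesgue" "W \<in> sets lebesgue" "U \<subseteq> {a..b}" "W \<subseteq> {a..b}" "a \<le> b"
    and "measure lebesgue U + measure lebesgue W > b - a"
  shows "U \<inter> W \<noteq> {}"
proof
  assume disj: "U \<inter> W = {}"
  have U: "U \<in> lmeasurable" and W: "W \<in> lmeasurable"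
    using assms(1-4) by (meson bounded_set_imp_lmeasurable bounded_subset bounded_closed_interval)+
  have "measure lebesgue U + measure lebesgue W = measure lebesgue (U \<union> W)"
    using measure_Un3[OF U W] disj by simp
  also have "\<dots> \<le> measure lebesgue {a..b}"
    using assms(3,4) U W by (intro measure_mono_fmeasurable) auto
  also have "\<dots> = b - a"
    using assms(5) by simp
  finally show False
    using assms(6) by simp
qed

lemma good_shifts_translate_overlap:
  assumes k_meas: "k \<in> borel_measurable borel" and u: "u \<in> {0..1}"
    and x: "measure lebesgue (good_shifts k x N) > 3/2"
    and y: "measure lebesgue (good_shifts k y N) > 3/2"
  shows "good_shifts k x N \<inter> (+) u ` good_shifts k y N \<noteq> {}"
proof (rule lmeasurable_subsets_overlap)
  have "(+) u ` good_shifts k y N \<in> lmeasurable"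
    by (rule measurable_translation[OF good_shifts_lmeasurable[OF k_meas]])
  then show "good_shifts k x N \<in> sets lebesgue" "(+) u ` good_shifts k y N \<in> sets lebesgue"
    using good_shifts_lmeasurable[OF k_meas] by (auto dest: fmeasurableD)
  show "good_shifts k x N \<subseteq> {0..3}"
    by (auto simp: good_shifts_def)
  show "(+) u ` good_shifts k y N \<subseteq> {0..3}"
  proof
    fix w assume "w \<in> (+) u ` good_shifts k y N"
    then obtain v where "v \<in> {0..2}" "w = u + v"
      unfolding good_shifts_def by blast
    then show "w \<in> {0..3}"
      using u by simp
  qed
  show "measure lebesgue (good_shifts k x N) + measure lebesgue ((+) u ` good_shifts k y N) > 3 - 0"
    using x y by (simp add: measure_translation)
qed simp

text \<open>A Steinhaus-type argument: if the increment over \<open>u n\<close> at \<open>t n\<close> stayed above 2, the shifts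
  \<open>v\<close> keeping \<open>k (t n + v)\<close> close to \<open>k (t n)\<close> and the shifts \<open>u n + v\<close> keeping
  \<open>k (t n + u n + v)\<close> close to \<open>k (t n + u n)\<close> would be disjoint subsets of [0,3] of measure
  above 3/2 each.\<close>
lemma uniformly_bounded_increments:
  fixes k :: "real \<Rightarrow> real"
  assumes k_meas: "k \<in> borel_measurable borel"
    and k_incr: "\<And>u. u \<ge> 0 \<Longrightarrow> ((\<lambda>t. k (t + u) - k t) \<longlongrightarrow> 0) at_top"
  shows "\<exists>T. \<forall>t\<ge>T. \<forall>u\<in>{0..1}. \<bar>k (t + u) - k t\<bar> \<le> 2"
proof (rule ccontr)
  assume "\<not> ?thesis"
  then have "\<exists>t u. t \<ge> real n \<and> u \<in> {0..1} \<and> \<bar>k (t + u) - k t\<bar> > 2" for n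
    by (meson not_le)
  then obtain t u where t: "\<And>n. t n \<ge> real n" and u: "\<And>n. u n \<in> {0..1}"
    and big: "\<And>n. \<bar>k (t n + u n) - k (t n)\<bar> > 2"
    by metis
  define t' where "t' n = t n + u n" for n
  have t': "t' n \<ge> real n" for n
    using t[of n] u[of n] by (auto simp: t'_def)
  obtain N where "measure lebesgue (good_shifts k t N) > 3/2"
    and "measure lebesgue (good_shifts k t' N) > 3/2"
    using eventually_happens'[OF sequentially_bot eventually_conj[OF
        eventually_measure_good_shifts[OF k_meas k_incr t]
        eventually_measure_good_shifts[OF k_meas k_incr t']]] by blast
  then obtain v where "v \<in> good_shifts k t' N" and "u N + v \<in> good_shifts k t N"
    using good_shifts_translate_overlap[OF k_meas u[of N]] by blast
  then have "\<bar>k (t N + (u N + v)) - k (t N)\<bar> \<le> 1" "\<bar>k (t' N + v) - k (t' N)\<bar> \<le> 1"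
    unfolding good_shifts_def by blast+
  then have "\<bar>k (t N + u N) - k (t N)\<bar> \<le> 2"
    unfolding t'_def add.assoc by linarith
  with big[of N] show False
    by linarith
qed

lemma regularly_varying_log_increments:
  assumes rv: "regularly_varying f s" and u: "u \<ge> 0"
  shows "((\<lambda>t. (ln (f (exp (t + u))) - s * (t + u)) - (ln (f (exp t)) - s * t)) \<longlongrightarrow> 0) at_top"
proof (cases "u = 0")
  case False
  then have exp_u: "exp u > 1"
    using u by simp
  obtain X0 where X0: "\<And>x. x \<ge> X0 \<Longrightarrow> f x > 0"
    using rv by (auto simp: regularly_varying_def eventually_at_top_linorder)
  have "((\<lambda>x. f (exp u * x) / f x) \<longlongrightarrow> exp u powr s) at_top"
    using rv exp_u by (simp add: regularly_varying_def)
  then have "((\<lambda>t. f (exp u * exp t) / f (exp t)) \<longlongrightarrow> exp u powr s) at_top"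
    using exp_at_top by (rule filterlim_compose)
  then have "((\<lambda>t. ln (f (exp u * exp t) / f (exp t)) - s * u) \<longlongrightarrow> ln (exp u powr s) - s * u) at_top"
    by (intro tendsto_intros) auto
  then have lim: "((\<lambda>t. ln (f (exp u * exp t) / f (exp t)) - s * u) \<longlongrightarrow> 0) at_top"
    by (simp add: ln_powr)
  have "\<forall>\<^sub>F t in at_top. X0 \<le> exp t"
    using exp_at_top by (simp add: filterlim_at_top)
  then have "\<forall>\<^sub>F t in at_top. ln (f (exp u * exp t) / f (exp t)) - s * u
      = (ln (f (exp (t + u))) - s * (t + u)) - (ln (f (exp t)) - s * t)"
  proof eventually_elim
    case (elim t)
    have "f (exp t) > 0" "f (exp u * exp t) > 0"
      using X0 elim exp_u by (auto intro!: X0 order_trans[OF elim])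
    then show ?case
      by (simp add: exp_add ln_div algebra_simps)
  qed
  then show ?thesis
    using lim by (rule Lim_transform_eventually[rotated])
qed simp

lemma le_exp_mult_if_abs_ln_diff_le:
  fixes a b c :: real
  assumes "a > 0" "b > 0" "\<bar>ln a - ln b\<bar> \<le> c"
  shows "a \<le> exp c * b"
proof -
  have "a = exp (ln a)"
    using assms(1) by simp
  also have "\<dots> \<le> exp (c + ln b)"
    using assms(3) by simp
  also have "\<dots> = exp c * b"
    using assms(2) by (simp add: exp_add)
  finally show ?thesis .
qed

definition dyadically_comparable :: "(real \<Rightarrow> real) \<Rightarrow> real \<Rightarrow> real \<Rightarrow> bool" where
  "dyadically_comparable f K X \<longleftrightarrow> K \<ge> 1 \<and>
     (\<forall>x\<ge>X. f x > 0 \<and> (\<forall>l\<in>{1..2}. f (l * x) \<le> K * f x \<and> f x \<le> K * f (l * x)))"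

lemma dyadically_comparableD:
  assumes cmp: "dyadically_comparable f K X" and x: "X \<le> x" "x > 0" and y: "x \<le> y" "y \<le> 2 * x"
  shows "f x \<le> K * f y" "f y \<le> K * f x"
proof -
  have "y / x \<in> {1..2}"
    using x y by (auto simp: field_simps)
  moreover have "\<forall>l\<in>{1..2}. f (l * x) \<le> K * f x \<and> f x \<le> K * f (l * x)"
    using cmp x by (simp add: dyadically_comparable_def)
  ultimately have "f (y / x * x) \<le> K * f x \<and> f x \<le> K * f (y / x * x)"
    by blast
  then show "f x \<le> K * f y" "f y \<le> K * f x"
    using x by simp_all
qed

lemma dyadically_comparable_pos:
  assumes "dyadically_comparable f K X" "X \<le> x"
  shows "f x > 0"
  using assms by (simp add: dyadically_comparable_def)

lemma dyadically_comparable_quadruple: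
  assumes cmp: "dyadically_comparable f K X" and y: "X \<le> y" "y > 0" and x: "y \<le> x" "x \<le> 4 * y"
  shows "f y \<le> K^2 * f x"
proof -
  define l where "l = sqrt (x / y)"
  have ratio: "1 \<le> x / y" "x / y \<le> 4"
    using x y by (simp_all add: field_simps)
  have "sqrt 1 \<le> l" "l \<le> sqrt 4"
    unfolding l_def using ratio by (simp_all only: real_sqrt_le_iff)
  moreover have "l * (l * y) = x"
    using ratio y by (simp add: l_def mult.assoc[symmetric])
  ultimately have l: "1 \<le> l" "l \<le> 2" "l * (l * y) = x"
    by simp_all
  have "y \<le> l * y" "l * y \<le> l * (l * y)" "l * (l * y) \<le> 2 * (l * y)"
    using l(1,2) y by (simp_all add: mult_right_mono)
  then have ly: "X \<le> l * y" "0 < l * y" "l * y \<le> x" "x \<le> 2 * (l * y)"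
    using l(3) y by linarith+
  have "f y \<le> K * f (l * y)"
    using dyadically_comparableD(1)[OF cmp y] l y by simp
  also have "\<dots> \<le> K * (K * f x)"
    using dyadically_comparableD(1)[OF cmp ly] cmp by (simp add: dyadically_comparable_def)
  finally show ?thesis
    by (simp add: power2_eq_square)
qed

lemma dyadically_comparable_if_log_increments_bounded:
  fixes f :: "real \<Rightarrow> real"
  assumes T: "\<And>t u. t \<ge> T \<Longrightarrow> u \<in> {0..1} \<Longrightarrow>
      \<bar>(ln (f (exp (t + u))) - s * (t + u)) - (ln (f (exp t)) - s * t)\<bar> \<le> 2"
    and X0: "\<And>x. x \<ge> X0 \<Longrightarrow> f x > 0"
  shows "dyadically_comparable f (exp (2 + \<bar>s\<bar>)) (max (exp T) (max X0 1))"
proof -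
  have "f (l * x) \<le> exp (2 + \<bar>s\<bar>) * f x \<and> f x \<le> exp (2 + \<bar>s\<bar>) * f (l * x)"
    if x: "x \<ge> max (exp T) (max X0 1)" and l: "l \<in> {1..2}" for x l
  proof -
    have x_pos: "x > 0" and T_le: "T \<le> ln x"
      using x by (auto simp: ln_ge_iff)
    have "ln l \<le> ln 2"
      using l by simp
    then have "ln l \<le> 1"
      using ln_2_less_1 by linarith
    moreover have "ln l \<ge> 0"
      using l by simp
    ultimately have ln_l: "ln l \<in> {0..1}"
      by simp
    have "exp (ln x + ln l) = l * x"
      using x_pos l by (simp add: exp_add)
    then have "\<bar>ln (f (l * x)) - ln (f x) - s * ln l\<bar> \<le> 2"
      using T[OF T_le ln_l] x_pos by (simp add: algebra_simps)
    moreover have "\<bar>s * ln l\<bar> \<le> \<bar>s\<bar>"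
      using ln_l by (simp add: abs_mult mult_left_le)
    ultimately have ln_diff: "\<bar>ln (f (l * x)) - ln (f x)\<bar> \<le> 2 + \<bar>s\<bar>"
      by linarith
    have "x \<le> l * x"
      using l x_pos by simp
    moreover have "X0 \<le> x"
      using x by simp
    ultimately have "X0 \<le> x" "X0 \<le> l * x"
      by linarith+
    then have pos: "f x > 0" "f (l * x) > 0"
      using X0 by blast+
    show ?thesis
      using le_exp_mult_if_abs_ln_diff_le[OF pos(2,1) ln_diff]
        le_exp_mult_if_abs_ln_diff_le[OF pos ln_diff[unfolded abs_minus_commute]]
      by simp
  qed
  then show ?thesis
    using X0 by (simp add: dyadically_comparable_def)
qed

text \<open>The uniform convergence theorem for regularly varying functions, applied to
  \<open>k t = ln (f (exp t)) - s t\<close>.\<close>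
lemma regularly_varying_dyadically_comparable:
  assumes rv: "regularly_varying f s"
  shows "\<exists>K X. dyadically_comparable f K X"
proof -
  define k where "k t = ln (f (exp t)) - s * t" for t
  have "f \<in> borel_measurable borel"
    using rv by (simp add: regularly_varying_def)
  then have "k \<in> borel_measurable borel"
    unfolding k_def by measurable
  moreover have "((\<lambda>t. k (t + u) - k t) \<longlongrightarrow> 0) at_top" if "u \<ge> 0" for u
    using regularly_varying_log_increments[OF rv that] by (simp add: k_def)
  ultimately obtain T where T: "\<And>t u. t \<ge> T \<Longrightarrow> u \<in> {0..1} \<Longrightarrow> \<bar>k (t + u) - k t\<bar> \<le> 2"
    using uniformly_bounded_increments by blast
  obtain X0 where X0: "\<And>x. x \<ge> X0 \<Longrightarrow> f x > 0"
    using rv by (auto simp: regularly_varying_def eventually_at_top_linorder)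
  have "dyadically_comparable f (exp (2 + \<bar>s\<bar>)) (max (exp T) (max X0 1))"
    using T[unfolded k_def] X0 by (rule dyadically_comparable_if_log_increments_bounded)
  then show ?thesis
    by blast
qed

lemma dyadically_comparable_weighted_quadruple:
  assumes cmp: "dyadically_comparable f K X" and a: "a \<ge> 0"
    and y: "X \<le> y" "y > 0" and x: "y \<le> x" "x \<le> 4 * y"
  shows "f y * y powr (-a) \<le> K^2 * f x * (4 powr a * x powr (-a))"
proof -
  have "f y \<le> K^2 * f x"
    by (rule dyadically_comparable_quadruple[OF cmp y x])
  moreover have "y powr (-a) \<le> (x / 4) powr (-a)"
    using a y x by (intro powr_mono2') auto
  moreover have "(x / 4) powr (-a) = 4 powr a * x powr (-a)"
    using x y by (simp add: powr_divide powr_minus field_simps)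
  ultimately show ?thesis
    using dyadically_comparable_pos[OF cmp y(1)] by (intro mult_mono) auto
qed

lemma regularly_varying_doubling:
  assumes rv: "regularly_varying f s" and "s < s'"
  shows "\<exists>Y. \<forall>y\<ge>Y. f y > 0 \<and> f (2 * y) \<le> 2 powr s' * f y"
proof -
  have "((\<lambda>x. f (2 * x) / f x) \<longlongrightarrow> 2 powr s) at_top"
    using rv by (simp add: regularly_varying_def)
  moreover have "2 powr s < (2::real) powr s'"
    using assms(2) by simp
  ultimately have "\<forall>\<^sub>F x in at_top. f (2 * x) / f x < 2 powr s'"
    by (rule order_tendstoD(2))
  moreover have "\<forall>\<^sub>F x in at_top. f x > 0"
    using rv by (simp add: regularly_varying_def)
  ultimately have "\<forall>\<^sub>F x in at_top. f x > 0 \<and> f (2 * x) \<le> 2 powr s' * f x"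
    by eventually_elim (auto simp: divide_less_eq less_imp_le)
  then show ?thesis
    by (auto simp: eventually_at_top_linorder)
qed

lemma doubling_geometric_decay:
  fixes f :: "real \<Rightarrow> real"
  assumes dbl: "\<forall>y\<ge>Y. f y > 0 \<and> f (2 * y) \<le> 2 powr s' * f y" and y: "y \<ge> Y" "y > 0"
  shows "f (2^k * y) * (2^k * y) powr (-t) \<le> (2 powr (s' - t))^k * (f y * y powr (-t))"
proof (induction k)
  case (Suc k)
  have "y \<le> 2^k * y"
    using y(2) by simp
  then have z: "2^k * y \<ge> Y" "2^k * y > 0"
    using y by linarith+
  have "f (2^Suc k * y) * (2^Suc k * y) powr (-t)
      = f (2 * (2^k * y)) * (2 powr (-t) * (2^k * y) powr (-t))"
    using z by (simp add: powr_mult mult.assoc)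
  also have "\<dots> \<le> 2 powr s' * f (2^k * y) * (2 powr (-t) * (2^k * y) powr (-t))"
    using dbl z by (intro mult_right_mono) auto
  also have "\<dots> = 2 powr (s' - t) * (f (2^k * y) * (2^k * y) powr (-t))"
    by (simp add: powr_diff powr_minus field_simps)
  also have "\<dots> \<le> 2 powr (s' - t) * ((2 powr (s' - t))^k * (f y * y powr (-t)))"
    using Suc by (intro mult_left_mono) auto
  finally show ?case
    by simp
qed simp

section \<open>Dyadic block counts and tail sums\<close>

lemma count_exponent_nonneg:
  fixes E :: "nat set" and f :: "real \<Rightarrow> real"
  assumes rv: "regularly_varying f s" and c: "c > 0" and C: "C > 0"
    and cnt: "\<forall>N\<ge>N0. c * f (real N) \<le> real (card (E \<inter> {N..2*N})) \<and>
                     real (card (E \<inter> {N..2*N})) \<le> C * f (real N)"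
  shows "s \<ge> 0"
proof (rule ccontr)
  assume "\<not> s \<ge> 0"
  then obtain Y where dbl: "\<forall>y\<ge>Y. f y > 0 \<and> f (2 * y) \<le> 2 powr (s/2) * f y"
    using regularly_varying_doubling[OF rv, of "s/2"] by auto
  define \<theta> where "\<theta> = (2::real) powr (s/2)"
  have \<theta>: "0 < \<theta>" "\<theta> < 1"
    using \<open>\<not> s \<ge> 0\<close> by (auto simp: \<theta>_def powr_less_one)
  define N where "N = max N0 (nat \<lceil>Y\<rceil>) + 1"
  have N: "real N \<ge> Y" "real N > 0" "N \<ge> N0"
    unfolding N_def by linarith+
  have decay: "f (2^k * real N) \<le> \<theta>^k * f (real N)" for k
    using doubling_geometric_decay[OF dbl N(1,2), of k 0] N(2) by (simp add: \<theta>_def)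
  \<comment> \<open>The upper count bound for the block at \<open>2^k N\<close> eventually drops below 1, the lower one stays positive.\<close>
  have "(\<lambda>k. C * (\<theta>^k * f (real N))) \<longlonglongrightarrow> C * (0 * f (real N))"
    using \<theta> by (intro tendsto_intros LIMSEQ_power_zero) auto
  then have "\<forall>\<^sub>F k in sequentially. C * (\<theta>^k * f (real N)) < 1"
    by (rule order_tendstoD) simp
  then obtain k where k: "C * (\<theta>^k * f (real N)) < 1"
    by (auto simp: eventually_sequentially)
  define M where "M = 2^k * N"
  have "N \<le> M"
    by (simp add: M_def)
  then have M: "M \<ge> N0" "real M \<ge> Y"
    using N by linarith+
  have "0 < c * f (real M)"
    using c dbl M(2) by simp
  also have "\<dots> \<le> real (card (E \<inter> {M..2*M}))"
    using cnt M(1) by blast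
  finally have "card (E \<inter> {M..2*M}) \<ge> 1"
    by simp
  then have "1 \<le> real (card (E \<inter> {M..2*M}))"
    by simp
  also have "\<dots> \<le> C * f (real M)"
    using cnt M(1) by blast
  also have "\<dots> \<le> C * (\<theta>^k * f (real N))"
    using decay[of k] C by (simp add: M_def)
  finally show False
    using k by simp
qed

definition tail_sum :: "nat set \<Rightarrow> (real \<Rightarrow> real) \<Rightarrow> real \<Rightarrow> ennreal" where
  "tail_sum E g x = (\<integral>\<^sup>+ b. indicator {b. real b > x} b * ennreal (g (real b)) \<partial>count_space E)"

lemma nn_integral_count_space_const_indicator:
  fixes E B :: "nat set"
  assumes "B \<subseteq> E" "finite B" "c \<ge> 0"
  shows "(\<integral>\<^sup>+ b. ennreal c * indicator B b \<partial>count_space E) = ennreal (c * real (card B))"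
proof -
  have "(\<integral>\<^sup>+ b. ennreal c * indicator B b \<partial>count_space E) = ennreal c * emeasure (count_space E) B"
    using assms(1) by (intro nn_integral_cmult_indicator) auto
  also have "\<dots> = ennreal (c * real (card B))"
    using assms by (simp add: ennreal_mult ennreal_of_nat_eq_real_of_nat)
  finally show ?thesis .
qed

lemma block_le_tail_sum:
  fixes E :: "nat set"
  assumes "x < real N" "a \<ge> 0"
  shows "ennreal ((real (2*N) + 1) powr (-a) * real (card (E \<inter> {N..2*N})))
           \<le> tail_sum E (\<lambda>t. (t + 1) powr (-a)) x"
proof -
  let ?B = "E \<inter> {N..2*N}" and ?P = "(real (2*N) + 1) powr (-a)"
  have "ennreal (?P * real (card ?B)) = (\<integral>\<^sup>+ b. ennreal ?P * indicator ?B b \<partial>count_space E)"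
    by (rule nn_integral_count_space_const_indicator[symmetric]) auto
  also have "\<dots> \<le> tail_sum E (\<lambda>t. (t + 1) powr (-a)) x"
    unfolding tail_sum_def
  proof (intro nn_integral_mono)
    fix b
    show "ennreal ?P * indicator ?B b \<le> indicator {b. real b > x} b * ennreal ((real b + 1) powr (-a))"
    proof (cases "b \<in> ?B")
      case True
      then have "real b > x" "?P \<le> (real b + 1) powr (-a)"
        using assms by (auto intro!: powr_mono2')
      then show ?thesis
        using True by (simp add: ennreal_leI)
    qed simp
  qed
  finally show ?thesis .
qed

lemma tail_sum_lower_bound:
  fixes E :: "nat set" and f :: "real \<Rightarrow> real"
  assumes \<delta>: "\<delta> \<ge> 0" and cmp: "dyadically_comparable f K X1" and c0: "c0 > 0"
    and cnt: "\<forall>N\<ge>N0. c0 * f (real N) \<le> real (card (E \<inter> {N..2*N}))"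
    and x: "x \<ge> max (max X1 2) (real N0)"
  shows "ennreal (c0 / K * 5 powr (-2*\<delta>) * (x powr (-2*\<delta>) * f x))
           \<le> tail_sum E (\<lambda>t. (t + 1) powr (-2*\<delta>)) x"
proof -
  have K: "K \<ge> 1"
    using cmp by (simp add: dyadically_comparable_def)
  define N where "N = nat \<lceil>x\<rceil> + 1"
  have "real N = of_int \<lceil>x\<rceil> + 1"
    using x by (simp add: N_def)
  then have N: "x + 1 \<le> real N" "real N \<le> x + 2"
    using ceiling_correct[of x] by linarith+
  then have "N \<ge> N0"
    using x by linarith
  define P where "P = (real (2*N) + 1) powr (-2*\<delta>)"
  have P: "P \<ge> 0" "(5 * x) powr (-2*\<delta>) \<le> P"
    unfolding P_def using \<delta> x N by (auto intro!: powr_mono2')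
  have fx: "f x > 0" "f x \<le> K * f (real N)"
    using x N by (auto intro: dyadically_comparable_pos[OF cmp] dyadically_comparableD(1)[OF cmp])
  have "c0 / K * 5 powr (-2*\<delta>) * (x powr (-2*\<delta>) * f x) = c0 * (5 * x) powr (-2*\<delta>) * (f x / K)"
    using x K by (simp add: powr_mult field_simps)
  also have "\<dots> \<le> c0 * P * f (real N)"
  proof (rule mult_mono)
    show "c0 * (5 * x) powr (-2*\<delta>) \<le> c0 * P"
      using c0 P by simp
    show "f x / K \<le> f (real N)"
      using fx K by (simp add: divide_le_eq mult.commute)
  qed (use c0 P fx K in auto)
  also have "\<dots> = P * (c0 * f (real N))"
    by (simp add: ac_simps)
  also have "\<dots> \<le> P * real (card (E \<inter> {N..2*N}))"
    using cnt \<open>N \<ge> N0\<close> P by (intro mult_left_mono) auto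
  finally have "ennreal (c0 / K * 5 powr (-2*\<delta>) * (x powr (-2*\<delta>) * f x))
      \<le> ennreal (P * real (card (E \<inter> {N..2*N})))"
    by (rule ennreal_leI)
  also have "\<dots> \<le> tail_sum E (\<lambda>t. (t + 1) powr (-2*\<delta>)) x"
    using block_le_tail_sum[of x N "2*\<delta>" E] N \<delta> by (simp add: P_def)
  finally show ?thesis .
qed

lemma dyadic_block_exists:
  fixes M b :: nat
  assumes "M \<ge> 1" "M \<le> b"
  shows "\<exists>k. 2^k * M \<le> b \<and> b < 2^Suc k * M"
proof -
  have "b div M \<ge> 1"
    using assms by (simp add: Suc_le_eq div_greater_zero_iff)
  then obtain k where k: "2^k \<le> b div M" "b div M < 2^(k + 1)"
    using ex_power_ivl1[of 2 "b div M"] by auto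
  have "2^k * M \<le> b div M * M"
    using k(1) by (rule mult_right_mono) simp
  also have "\<dots> \<le> b"
    by simp
  finally have lower: "2^k * M \<le> b" .
  have "b < (b div M + 1) * M"
    using dividend_less_times_div[of M b] assms(1) by (simp add: mult.commute)
  also have "\<dots> \<le> 2^Suc k * M"
    using k(2) by (intro mult_right_mono) auto
  finally show ?thesis
    using lower by blast
qed

lemma tail_sum_le_dyadic_blocks:
  fixes E :: "nat set"
  assumes M: "M \<ge> 1" "real M \<le> y" and a: "a \<ge> 0"
  shows "tail_sum E (\<lambda>t. t powr (-a)) y
           \<le> (\<Sum>k. ennreal (real (2^k * M) powr (-a) * real (card (E \<inter> {2^k * M..2 * (2^k * M)}))))"
proof -
  define w where "w k = real (2^k * M) powr (-a)" for k
  define B where "B k = E \<inter> {2^k * M..2 * (2^k * M)}" for k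
  have "indicator {b. real b > y} b * ennreal (real b powr (-a)) \<le> (\<Sum>k. ennreal (w k) * indicator (B k) b)"
    if "b \<in> E" for b
  proof (cases "real b > y")
    case True
    then have "real M \<le> real b"
      using M(2) by linarith
    then obtain k where k: "2^k * M \<le> b" "b < 2^Suc k * M"
      using dyadic_block_exists[OF M(1)] by auto
    have "real (2^k * M) \<le> real b"
      using k(1) by (simp only: of_nat_le_iff)
    then have "real b powr (-a) \<le> w k"
      unfolding w_def using M(1) a by (intro powr_mono2') simp_all
    then have "indicator {b. real b > y} b * ennreal (real b powr (-a)) \<le> ennreal (w k) * indicator (B k) b"
      using True k that by (simp add: B_def ennreal_leI)
    also have "\<dots> = (\<Sum>j\<in>{k}. ennreal (w j) * indicator (B j) b)"
      by (subst sum.insert) simp_all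
    also have "\<dots> \<le> (\<Sum>j. ennreal (w j) * indicator (B j) b)"
      by (rule sum_le_suminf) (auto intro: summableI)
    finally show ?thesis .
  qed simp
  then have "tail_sum E (\<lambda>t. t powr (-a)) y \<le> (\<integral>\<^sup>+ b. (\<Sum>k. ennreal (w k) * indicator (B k) b) \<partial>count_space E)"
    unfolding tail_sum_def by (intro nn_integral_mono) auto
  also have "\<dots> = (\<Sum>k. \<integral>\<^sup>+ b. ennreal (w k) * indicator (B k) b \<partial>count_space E)"
    by (rule nn_integral_suminf) simp
  also have "\<dots> = (\<Sum>k. ennreal (w k * real (card (B k))))"
    by (simp add: B_def w_def nn_integral_count_space_const_indicator)
  finally show ?thesis
    by (simp add: w_def B_def)
qed

lemma suminf_ennreal_geometric:
  fixes c q :: real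
  assumes "c \<ge> 0" "0 \<le> q" "q < 1"
  shows "(\<Sum>k. ennreal (c * q^k)) = ennreal (c / (1 - q))"
proof -
  have "summable (\<lambda>k. q^k)"
    using assms by (intro summable_geometric) simp
  then have "(\<Sum>k. ennreal (c * q^k)) = ennreal (\<Sum>k. c * q^k)"
    using assms by (intro suminf_ennreal2) (auto intro: summable_mult)
  also have "(\<Sum>k. c * q^k) = c / (1 - q)"
    using assms by (simp add: suminf_mult suminf_geometric)
  finally show ?thesis .
qed

lemma dyadic_block_contribution_le:
  fixes E :: "nat set" and f :: "real \<Rightarrow> real"
  assumes cnt: "\<forall>N\<ge>N0. real (card (E \<inter> {N..2*N})) \<le> C0 * f (real N)" and C0: "C0 \<ge> 0"
    and dbl: "\<forall>y\<ge>Y. f y > 0 \<and> f (2 * y) \<le> 2 powr s' * f y"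
    and M: "N0 \<le> M" "Y \<le> real M" "M \<ge> 1"
  shows "real (2^k * M) powr (-a) * real (card (E \<inter> {2^k * M..2 * (2^k * M)}))
           \<le> C0 * (f (real M) * real M powr (-a)) * (2 powr (s' - a))^k"
proof -
  have "N0 \<le> 2^k * M"
    using M(1) by (simp add: le_trans)
  then have "real (card (E \<inter> {2^k * M..2 * (2^k * M)})) \<le> C0 * f (real (2^k * M))"
    using cnt by blast
  then have "real (2^k * M) powr (-a) * real (card (E \<inter> {2^k * M..2 * (2^k * M)}))
      \<le> real (2^k * M) powr (-a) * (C0 * f (real (2^k * M)))"
    by (rule mult_left_mono) simp
  also have "\<dots> = C0 * (f (2^k * real M) * (2^k * real M) powr (-a))"
    by (simp add: ac_simps)
  also have "\<dots> \<le> C0 * ((2 powr (s' - a))^k * (f (real M) * real M powr (-a)))"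
    using doubling_geometric_decay[OF dbl, of "real M" k a] M C0 by (intro mult_left_mono) simp_all
  finally show ?thesis
    by (simp only: mult.assoc mult.commute[of "(2 powr (s' - a))^k"])
qed

text \<open>The tail splits into dyadic blocks whose contributions decay geometrically with
  ratio \<open>2 powr (s' - 2\<delta>) < 1\<close>, so it is dominated by its first block.\<close>
lemma tail_sum_upper_bound:
  fixes E :: "nat set" and f :: "real \<Rightarrow> real"
  assumes \<delta>: "\<delta> \<ge> 0" and cmp: "dyadically_comparable f K X1" and C0: "C0 > 0"
    and cnt: "\<forall>N\<ge>N0. real (card (E \<inter> {N..2*N})) \<le> C0 * f (real N)"
    and dbl: "\<forall>y\<ge>Y. f y > 0 \<and> f (2 * y) \<le> 2 powr s' * f y" and s': "s' < 2*\<delta>"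
    and x: "x \<ge> max 4 (max (2 * X1 + 2) (max (2 * Y + 2) (2 * real N0 + 2)))"
  shows "tail_sum E (\<lambda>t. t powr (-2*\<delta>)) (x - 1)
           \<le> ennreal (C0 * K^2 * 4 powr (2*\<delta>) / (1 - 2 powr (s' - 2*\<delta>)) * (x powr (-2*\<delta>) * f x))"
proof -
  define q where "q = (2::real) powr (s' - 2*\<delta>)"
  have q: "0 < q" "q < 1"
    using s' by (auto simp: q_def powr_less_one)
  define M where "M = nat \<lfloor>x/2\<rfloor>"
  have "real M = of_int \<lfloor>x/2\<rfloor>"
    using x by (simp add: M_def)
  then have "real M \<le> x/2" "x/2 - 1 < real M"
    using floor_correct[of "x/2"] by linarith+
  then have M: "M \<ge> 1" "real M \<ge> X1" "real M \<ge> Y" "real M \<ge> real N0" "real M \<le> x - 1"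
      "x \<le> 4 * real M"
    using x by linarith+
  define h where "h = f (real M) * real M powr (-2*\<delta>)"
  have h: "0 \<le> h" "h \<le> K^2 * f x * (4 powr (2*\<delta>) * x powr (-2*\<delta>))"
    using dyadically_comparable_pos[OF cmp M(2)]
      dyadically_comparable_weighted_quadruple[OF cmp, of "2*\<delta>" "real M" x] \<delta> M
    by (simp_all add: h_def)
  have "tail_sum E (\<lambda>t. t powr (-2*\<delta>)) (x - 1)
      \<le> (\<Sum>k. ennreal (real (2^k * M) powr (-2*\<delta>) * real (card (E \<inter> {2^k * M..2 * (2^k * M)}))))"
    using tail_sum_le_dyadic_blocks[OF M(1,5), of "2*\<delta>" E] \<delta>
    by (simp only: minus_mult_left mult_nonneg_nonneg zero_le_numeral simp_thms)
  also have "\<dots> \<le> (\<Sum>k. ennreal (C0 * h * q^k))"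
    using dyadic_block_contribution_le[OF cnt _ dbl, where M = M and a = "2*\<delta>"] C0 M
    by (intro suminf_le ennreal_leI summableI) (simp_all add: h_def q_def)
  also have "\<dots> = ennreal (C0 * h / (1 - q))"
    using C0 q h by (intro suminf_ennreal_geometric) auto
  also have "\<dots> \<le> ennreal (C0 * K^2 * 4 powr (2*\<delta>) / (1 - q) * (x powr (-2*\<delta>) * f x))"
  proof (rule ennreal_leI)
    have "C0 * h / (1 - q) \<le> C0 * (K^2 * f x * (4 powr (2*\<delta>) * x powr (-2*\<delta>))) / (1 - q)"
      using C0 q h by (intro divide_right_mono mult_left_mono) auto
    also have "\<dots> = C0 * K^2 * 4 powr (2*\<delta>) / (1 - q) * (x powr (-2*\<delta>) * f x)"
      by (simp add: ac_simps divide_inverse)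
    finally show "C0 * h / (1 - q) \<le> C0 * K^2 * 4 powr (2*\<delta>) / (1 - q) * (x powr (-2*\<delta>) * f x)" .
  qed
  finally show ?thesis
    by (simp only: q_def)
qed

section \<open>The conformal measure near zero\<close>

lemma deriv_phi:
  assumes "real a + x > 0"
  shows "deriv (phi a) x = - 1 / (real a + x)^2"
proof -
  have "((\<lambda>y. 1 / (real a + y)) has_real_derivative - 1 / (real a + x)^2) (at x)"
    using assms by (auto intro!: derivative_eq_intros simp: power2_eq_square)
  then show ?thesis
    unfolding phi_def[abs_def] by (rule DERIV_imp_deriv)
qed

lemma abs_deriv_phi_powr:
  assumes "real a + x > 0"
  shows "\<bar>deriv (phi a) x\<bar> powr \<delta> = (real a + x) powr (-2*\<delta>)"
proof -
  have "\<bar>deriv (phi a) x\<bar> = (real a + x) powr (-2)"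
    using assms by (simp add: deriv_phi powr_minus_divide)
  then show ?thesis
    by (simp add: powr_powr)
qed

lemma conformal_measure_unit_interval:
  assumes conf: "conformal_measure E \<delta> \<mu>"
  shows "emeasure \<mu> {0..1} = 1"
proof -
  interpret prob_space \<mu>
    using conf by (simp add: conformal_measure_def)
  have "LambdaE E \<subseteq> {0..1}"
    by (auto simp: LambdaE_def)
  moreover have "{0..1::real} \<in> sets \<mu>"
    using conf by (simp add: conformal_measure_def)
  ultimately have "emeasure \<mu> (LambdaE E) \<le> emeasure \<mu> {0..1}"
    by (rule emeasure_mono)
  then show ?thesis
    using conf emeasure_le_1[of "{0..1}"] by (simp add: conformal_measure_def)
qed

lemma conformal_measure_branch_integral_bounds:
  assumes conf: "conformal_measure E \<delta> \<mu>" and a: "a \<ge> 1" and \<delta>: "\<delta> \<ge> 0"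
  shows "phi a -` A \<inter> {0..1} = {0..1} \<Longrightarrow>
           ennreal ((real a + 1) powr (-2*\<delta>))
             \<le> (\<integral>\<^sup>+ x\<in>(phi a -` A \<inter> {0..1}). ennreal (\<bar>deriv (phi a) x\<bar> powr \<delta>) \<partial>\<mu>)"
    and "(\<integral>\<^sup>+ x\<in>(phi a -` A \<inter> {0..1}). ennreal (\<bar>deriv (phi a) x\<bar> powr \<delta>) \<partial>\<mu>)
           \<le> ennreal (real a powr (-2*\<delta>))"
proof -
  have int01: "(\<integral>\<^sup>+ x. ennreal c * indicator {0..1} x \<partial>\<mu>) = ennreal c" for c
    using conf conformal_measure_unit_interval[OF conf]
    by (simp add: nn_integral_cmult_indicator conformal_measure_def)
  have bounds: "(real a + 1) powr (-2*\<delta>) \<le> \<bar>deriv (phi a) x\<bar> powr \<delta>"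
    "\<bar>deriv (phi a) x\<bar> powr \<delta> \<le> real a powr (-2*\<delta>)" if "x \<in> {0..1}" for x
  proof -
    have x: "real a + x > 0" "real a \<le> real a + x" "real a + x \<le> real a + 1"
      using that a by auto
    show "(real a + 1) powr (-2*\<delta>) \<le> \<bar>deriv (phi a) x\<bar> powr \<delta>"
      "\<bar>deriv (phi a) x\<bar> powr \<delta> \<le> real a powr (-2*\<delta>)"
      unfolding abs_deriv_phi_powr[OF x(1)] using x a \<delta> by (auto intro!: powr_mono2')
  qed
  show "ennreal ((real a + 1) powr (-2*\<delta>))
      \<le> (\<integral>\<^sup>+ x\<in>(phi a -` A \<inter> {0..1}). ennreal (\<bar>deriv (phi a) x\<bar> powr \<delta>) \<partial>\<mu>)"
    if "phi a -` A \<inter> {0..1} = {0..1}"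
  proof -
    have "ennreal ((real a + 1) powr (-2*\<delta>))
        = (\<integral>\<^sup>+ x. ennreal ((real a + 1) powr (-2*\<delta>)) * indicator {0..1} x \<partial>\<mu>)"
      by (rule int01[symmetric])
    also have "\<dots> \<le> (\<integral>\<^sup>+ x\<in>{0..1}. ennreal (\<bar>deriv (phi a) x\<bar> powr \<delta>) \<partial>\<mu>)"
      using bounds(1) by (intro nn_integral_mono) (auto simp: indicator_def intro!: ennreal_leI)
    finally show ?thesis
      unfolding that .
  qed
  have "(\<integral>\<^sup>+ x\<in>(phi a -` A \<inter> {0..1}). ennreal (\<bar>deriv (phi a) x\<bar> powr \<delta>) \<partial>\<mu>)
      \<le> (\<integral>\<^sup>+ x. ennreal (real a powr (-2*\<delta>)) * indicator {0..1} x \<partial>\<mu>)"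
    using bounds(2) by (intro nn_integral_mono) (auto simp: indicator_def intro!: ennreal_leI)
  then show "(\<integral>\<^sup>+ x\<in>(phi a -` A \<inter> {0..1}). ennreal (\<bar>deriv (phi a) x\<bar> powr \<delta>) \<partial>\<mu>)
      \<le> ennreal (real a powr (-2*\<delta>))"
    by (simp only: int01)
qed

lemma conformal_measure_ge_tail_sum:
  assumes conf: "conformal_measure E \<delta> \<mu>" and E: "0 \<notin> E" and \<delta>: "\<delta> \<ge> 0"
    and A: "A \<in> sets borel" and \<rho>: "\<rho> > 0" and sub: "{0<..<\<rho>} \<subseteq> A"
  shows "tail_sum E (\<lambda>t. (t + 1) powr (-2*\<delta>)) (1/\<rho>) \<le> emeasure \<mu> A"
proof -
  have "tail_sum E (\<lambda>t. (t + 1) powr (-2*\<delta>)) (1/\<rho>)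
      \<le> (\<integral>\<^sup>+ a. (\<integral>\<^sup>+ x\<in>(phi a -` A \<inter> {0..1}). ennreal (\<bar>deriv (phi a) x\<bar> powr \<delta>) \<partial>\<mu>) \<partial>count_space E)"
    unfolding tail_sum_def
  proof (intro nn_integral_mono)
    fix a assume "a \<in> space (count_space E)"
    then have a: "a \<ge> 1"
      using E by (cases a) auto
    show "indicator {b. real b > 1/\<rho>} a * ennreal ((real a + 1) powr (-2*\<delta>))
        \<le> (\<integral>\<^sup>+ x\<in>(phi a -` A \<inter> {0..1}). ennreal (\<bar>deriv (phi a) x\<bar> powr \<delta>) \<partial>\<mu>)"
    proof (cases "real a > 1/\<rho>")
      case True
      have "phi a x \<in> A" if "x \<in> {0..1}" for x
      proof -
        have "1/\<rho> < real a + x"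
          using True that by simp
        then have "1 / (real a + x) < \<rho>"
          using \<rho> a that by (simp add: divide_less_eq field_simps)
        then show ?thesis
          using sub a that by (auto simp: phi_def)
      qed
      then have "phi a -` A \<inter> {0..1} = {0..1}"
        by auto
      then show ?thesis
        using True conformal_measure_branch_integral_bounds(1)[OF conf a \<delta>] by simp
    qed simp
  qed
  then show ?thesis
    using conf A by (simp add: conformal_measure_def)
qed

lemma conformal_measure_le_tail_sum:
  assumes conf: "conformal_measure E \<delta> \<mu>" and E: "0 \<notin> E" and \<delta>: "\<delta> \<ge> 0"
    and A: "A \<in> sets borel" and \<rho>: "\<rho> > 0" and sub: "A \<inter> {0<..} \<subseteq> {0<..<\<rho>}"
  shows "emeasure \<mu> A \<le> tail_sum E (\<lambda>t. t powr (-2*\<delta>)) (1/\<rho> - 1)"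
proof -
  have "(\<integral>\<^sup>+ a. (\<integral>\<^sup>+ x\<in>(phi a -` A \<inter> {0..1}). ennreal (\<bar>deriv (phi a) x\<bar> powr \<delta>) \<partial>\<mu>) \<partial>count_space E)
      \<le> tail_sum E (\<lambda>t. t powr (-2*\<delta>)) (1/\<rho> - 1)"
    unfolding tail_sum_def
  proof (intro nn_integral_mono)
    fix a assume "a \<in> space (count_space E)"
    then have a: "a \<ge> 1"
      using E by (cases a) auto
    show "(\<integral>\<^sup>+ x\<in>(phi a -` A \<inter> {0..1}). ennreal (\<bar>deriv (phi a) x\<bar> powr \<delta>) \<partial>\<mu>)
        \<le> indicator {b. real b > 1/\<rho> - 1} a * ennreal (real a powr (-2*\<delta>))"
    proof (cases "real a > 1/\<rho> - 1")
      case False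
      have "phi a x \<notin> A" if "x \<in> {0..1}" for x
      proof
        assume "phi a x \<in> A"
        moreover have "phi a x > 0"
          using a that by (simp add: phi_def)
        ultimately have "1 / (real a + x) < \<rho>"
          using sub by (auto simp: phi_def)
        then have "1/\<rho> < real a + x"
          using \<rho> a that by (simp add: divide_less_eq field_simps)
        then show False
          using False that by simp
      qed
      then have "phi a -` A \<inter> {0..1} = {}"
        by auto
      then show ?thesis
        by simp
    qed (use conformal_measure_branch_integral_bounds(2)[OF conf a \<delta>] in simp)
  qed
  then show ?thesis
    using conf A by (simp add: conformal_measure_def)
qed

lemma one_over_powr_neg:
  fixes r a :: real
  assumes "r > 0"
  shows "(1 / r) powr (-a) = r powr a"
proof -
  have "(1 / r) powr (-a) = 1 / r powr (-a)"
    using assms by (simp add: powr_divide)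
  also have "\<dots> = r powr a"
    by (simp add: powr_minus divide_inverse)
  finally show ?thesis .
qed

lemma dyadically_comparable_double_powr:
  assumes cmp: "dyadically_comparable f K X" and y: "X \<le> y" "y > 0"
  shows "y powr (-a) * f y \<le> 2 powr a * K * ((2 * y) powr (-a) * f (2 * y))"
proof -
  have "y powr (-a) * f y = 2 powr a * (2 * y) powr (-a) * f y"
    using y by (simp add: powr_mult powr_minus)
  also have "\<dots> \<le> 2 powr a * (2 * y) powr (-a) * (K * f (2 * y))"
    using dyadically_comparableD(1)[OF cmp y] y by (intro mult_left_mono) simp_all
  finally show ?thesis
    by (simp add: ac_simps)
qed

lemma conformal_measure_lower_bound:
  fixes E :: "nat set" and f :: "real \<Rightarrow> real"
  assumes conf: "conformal_measure E \<delta> \<mu>" and E: "0 \<notin> E" and \<delta>: "\<delta> \<ge> 0"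
    and rv: "regularly_varying f s" and c0: "c0 > 0"
    and cnt: "\<forall>N\<ge>N0. c0 * f (real N) \<le> real (card (E \<inter> {N..2*N}))"
  shows "\<exists>c r0. c > 0 \<and> r0 > 0 \<and> (\<forall>A\<in>sets borel. \<forall>r. 0 < r \<and> r < r0 \<and> {0<..<r} \<subseteq> A \<longrightarrow>
           c * (r powr (2*\<delta>) * f (1/r)) \<le> measure \<mu> A)"
proof -
  interpret prob_space \<mu>
    using conf by (simp add: conformal_measure_def)
  obtain K X1 where cmp: "dyadically_comparable f K X1"
    using regularly_varying_dyadically_comparable[OF rv] by blast
  have K: "K \<ge> 1"
    using cmp by (simp add: dyadically_comparable_def)
  define c where "c = c0 / K * 5 powr (-2*\<delta>)"
  define X where "X = max (max X1 2) (real N0)"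
  have X: "X > 0"
    by (simp add: X_def)
  have "c * (r powr (2*\<delta>) * f (1/r)) \<le> measure \<mu> A"
    if A: "A \<in> sets borel" and r: "0 < r" "r < 1/X" and sub: "{0<..<r} \<subseteq> A" for A r
  proof -
    have "X \<le> 1/r"
      using r X by (simp add: field_simps)
    then have "ennreal (c * (r powr (2*\<delta>) * f (1/r))) \<le> tail_sum E (\<lambda>t. (t + 1) powr (-2*\<delta>)) (1/r)"
      using tail_sum_lower_bound[OF \<delta> cmp c0 cnt, of "1/r"] r by (simp add: X_def c_def one_over_powr_neg)
    also have "\<dots> \<le> emeasure \<mu> A"
      by (rule conformal_measure_ge_tail_sum[OF conf E \<delta> A r(1) sub])
    finally show ?thesis
      by (simp add: emeasure_eq_measure)
  qed
  moreover have "c > 0" "1/X > 0"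
    using c0 K X by (simp_all add: c_def)
  ultimately show ?thesis
    by blast
qed

lemma conformal_measure_upper_bound:
  fixes E :: "nat set" and f :: "real \<Rightarrow> real"
  assumes conf: "conformal_measure E \<delta> \<mu>" and E: "0 \<notin> E" and \<delta>: "\<delta> \<ge> 0"
    and rv: "regularly_varying f s" and s: "s < 2*\<delta>" and C0: "C0 > 0"
    and cnt: "\<forall>N\<ge>N0. real (card (E \<inter> {N..2*N})) \<le> C0 * f (real N)"
  shows "\<exists>C r0. C > 0 \<and> r0 > 0 \<and> (\<forall>A\<in>sets borel. \<forall>r. 0 < r \<and> r < r0 \<and> A \<inter> {0<..} \<subseteq> {0<..<2*r} \<longrightarrow>
           measure \<mu> A \<le> C * (r powr (2*\<delta>) * f (1/r)))"
proof -
  interpret prob_space \<mu>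
    using conf by (simp add: conformal_measure_def)
  obtain K X1 where cmp: "dyadically_comparable f K X1"
    using regularly_varying_dyadically_comparable[OF rv] by blast
  have K: "K \<ge> 1"
    using cmp by (simp add: dyadically_comparable_def)
  define s' where "s' = (s + 2*\<delta>) / 2"
  obtain Y where dbl: "\<forall>y\<ge>Y. f y > 0 \<and> f (2 * y) \<le> 2 powr s' * f y"
    using regularly_varying_doubling[OF rv, of s'] s by (auto simp: s'_def)
  have q: "2 powr (s' - 2*\<delta>) < (1::real)"
    using s by (intro powr_less_one) (auto simp: s'_def)
  define C where "C = C0 * K^2 * 4 powr (2*\<delta>) / (1 - 2 powr (s' - 2*\<delta>))"
  have C: "C > 0"
    using C0 K q by (simp add: C_def)
  define X where "X = max (max 4 (max (2 * X1 + 2) (max (2 * Y + 2) (2 * real N0 + 2)))) X1"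
  have X: "X > 0"
    by (simp add: X_def)
  have "measure \<mu> A \<le> C * 2 powr (2*\<delta>) * K * (r powr (2*\<delta>) * f (1/r))"
    if A: "A \<in> sets borel" and r: "0 < r" "r < 1/(2*X)" and sub: "A \<inter> {0<..} \<subseteq> {0<..<2*r}" for A r
  proof -
    have x: "X \<le> 1/(2*r)"
      using r X by (simp add: field_simps)
    then have x1: "X1 \<le> 1/(2*r)"
      by (simp add: X_def)
    have "emeasure \<mu> A \<le> tail_sum E (\<lambda>t. t powr (-2*\<delta>)) (1/(2*r) - 1)"
      using r by (intro conformal_measure_le_tail_sum[OF conf E \<delta> A]) (use sub in auto)
    also have "\<dots> \<le> ennreal (C * ((1/(2*r)) powr (-2*\<delta>) * f (1/(2*r))))"
      using tail_sum_upper_bound[OF \<delta> cmp C0 cnt dbl, of "1/(2*r)"] x s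
      by (simp add: X_def C_def s'_def)
    also have "\<dots> \<le> ennreal (C * (2 powr (2*\<delta>) * K * ((1/r) powr (-2*\<delta>) * f (1/r))))"
      using dyadically_comparable_double_powr[OF cmp x1, of "2*\<delta>"] r C
      by (intro ennreal_leI mult_left_mono) simp_all
    finally have bound: "emeasure \<mu> A \<le> ennreal (C * (2 powr (2*\<delta>) * K * ((1/r) powr (-2*\<delta>) * f (1/r))))" .
    have "f (1/r) > 0"
      using dyadically_comparable_pos[OF cmp, of "1/r"] x1 r by (simp add: field_simps)
    then have "0 \<le> C * 2 powr (2*\<delta>) * K * (r powr (2*\<delta>) * f (1/r))"
      using C K by simp
    then show ?thesis
      using bound r by (simp add: emeasure_eq_measure one_over_powr_neg ac_simps)
  qed
  moreover have "C * 2 powr (2*\<delta>) * K > 0" "1/(2*X) > 0"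
    using C K X by simp_all
  ultimately show ?thesis
    by blast
qed

lemma conformal_measure_sandwich_bounds:
  fixes E :: "nat set" and f :: "real \<Rightarrow> real"
  assumes conf: "conformal_measure E \<delta> \<mu>" and E: "0 \<notin> E" and \<delta>: "\<delta> \<ge> 0"
    and rv: "regularly_varying f s" and s: "s < 2*\<delta>" and c0: "c0 > 0" and C0: "C0 > 0"
    and cnt: "\<forall>N\<ge>N0. c0 * f (real N) \<le> real (card (E \<inter> {N..2*N})) \<and>
                     real (card (E \<inter> {N..2*N})) \<le> C0 * f (real N)"
  obtains r0 c C where "r0 > 0" "c > 0" "C > 0"
    and "\<And>A r. A \<in> sets borel \<Longrightarrow> 0 < r \<Longrightarrow> r < r0 \<Longrightarrow> {0<..<r} \<subseteq> A \<Longrightarrow>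
           A \<inter> {0<..} \<subseteq> {0<..<2*r} \<Longrightarrow>
           c * (r powr (2*\<delta>) * f (1/r)) \<le> measure \<mu> A \<and> measure \<mu> A \<le> C * (r powr (2*\<delta>) * f (1/r))"
proof -
  obtain c r1 where "c > 0" "r1 > 0" and lower: "\<forall>A\<in>sets borel. \<forall>r. 0 < r \<and> r < r1 \<and> {0<..<r} \<subseteq> A
      \<longrightarrow> c * (r powr (2*\<delta>) * f (1/r)) \<le> measure \<mu> A"
    using conformal_measure_lower_bound[OF conf E \<delta> rv c0, of N0] cnt by blast
  moreover obtain C r2 where "C > 0" "r2 > 0" and upper: "\<forall>A\<in>sets borel. \<forall>r. 0 < r \<and> r < r2 \<and>
      A \<inter> {0<..} \<subseteq> {0<..<2*r} \<longrightarrow> measure \<mu> A \<le> C * (r powr (2*\<delta>) * f (1/r))"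
    using conformal_measure_upper_bound[OF conf E \<delta> rv s C0, of N0] cnt by blast
  ultimately show ?thesis
    using that[of "min r1 r2" c C] by auto
qed

lemma nbhd_cyl_between:
  assumes a: "a \<ge> 1" and r: "1 / real a \<le> r"
  shows "{0<..<r} \<subseteq> nbhd (cyl a) r" and "nbhd (cyl a) r \<inter> {0<..} \<subseteq> {0<..<2*r}"
proof -
  have phi_le: "0 < phi a y \<and> phi a y \<le> 1 / real a" if "y \<in> {0..1}" for y
    using a that by (auto simp: phi_def frac_le)
  show "{0<..<r} \<subseteq> nbhd (cyl a) r"
  proof
    fix z assume z: "z \<in> {0<..<r}"
    have "phi a 1 \<in> cyl a" "dist (phi a 1) z < r"
      using z phi_le[of 1] r by (auto simp: cyl_def dist_real_def)
    then show "z \<in> nbhd (cyl a) r"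
      by (auto simp: nbhd_def)
  qed
  show "nbhd (cyl a) r \<inter> {0<..} \<subseteq> {0<..<2*r}"
  proof
    fix z assume "z \<in> nbhd (cyl a) r \<inter> {0<..}"
    then obtain y where "y \<in> {0..1}" "dist (phi a y) z < r" "z > 0"
      by (auto simp: nbhd_def cyl_def)
    then show "z \<in> {0<..<2*r}"
      using phi_le[of y] r by (auto simp: dist_real_def)
  qed
qed

theorem mainTheorem10:
  fixes E :: "nat set" and \<delta> s :: real and \<mu> :: "real measure" and f :: "real \<Rightarrow> real"
  assumes E_pos: "0 \<notin> E"
    and regular: "pressure_vanishes_at E \<delta>"
    and conf: "conformal_measure E \<delta> \<mu>"
    and rv: "regularly_varying f s"
    and s_lt: "s < 2 * \<delta>"
    and count: "\<exists>c C N0. c > 0 \<and> C > 0 \<and> (\<forall>N::nat \<ge> N0.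
                  c * f (real N) \<le> real (card (E \<inter> {N..2*N})) \<and>
                  real (card (E \<inter> {N..2*N})) \<le> C * f (real N))"
  shows "\<exists>r0 c C. r0 > 0 \<and> c > 0 \<and> C > 0 \<and>
           (\<forall>r. 0 < r \<and> r < r0 \<longrightarrow>
              c * (r powr (2 * \<delta>) * f (1 / r)) \<le> measure \<mu> (ball 0 r) \<and>
              measure \<mu> (ball 0 r) \<le> C * (r powr (2 * \<delta>) * f (1 / r))) \<and>
           (\<forall>a\<in>E. \<forall>r. 1 / real a \<le> r \<and> r \<le> 1 \<and> r < r0 \<longrightarrow>
              c * (r powr (2 * \<delta>) * f (1 / r)) \<le> measure \<mu> (nbhd (cyl a) r) \<and>
              measure \<mu> (nbhd (cyl a) r) \<le> C * (r powr (2 * \<delta>) * f (1 / r)))"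
proof -
  obtain c0 C0 N0 where c0: "c0 > 0" and C0: "C0 > 0" and cnt: "\<forall>N::nat\<ge>N0.
      c0 * f (real N) \<le> real (card (E \<inter> {N..2*N})) \<and> real (card (E \<inter> {N..2*N})) \<le> C0 * f (real N)"
    using count by blast
  have \<delta>: "\<delta> \<ge> 0"
    using count_exponent_nonneg[OF rv c0 C0 cnt] s_lt by linarith
  obtain r0 c C where pos: "r0 > 0" "c > 0" "C > 0" and bounds: "\<And>A r. A \<in> sets borel \<Longrightarrow> 0 < r \<Longrightarrow>
      r < r0 \<Longrightarrow> {0<..<r} \<subseteq> A \<Longrightarrow> A \<inter> {0<..} \<subseteq> {0<..<2*r} \<Longrightarrow>
      c * (r powr (2*\<delta>) * f (1/r)) \<le> measure \<mu> A \<and> measure \<mu> A \<le> C * (r powr (2*\<delta>) * f (1/r))"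
    using conformal_measure_sandwich_bounds[OF conf E_pos \<delta> rv s_lt c0 C0 cnt] by blast
  have ball: "c * (r powr (2*\<delta>) * f (1/r)) \<le> measure \<mu> (ball 0 r) \<and>
      measure \<mu> (ball 0 r) \<le> C * (r powr (2*\<delta>) * f (1/r))" if "0 < r" "r < r0" for r
    using that by (intro bounds) (auto simp: dist_real_def)
  have nbhd: "c * (r powr (2*\<delta>) * f (1/r)) \<le> measure \<mu> (nbhd (cyl a) r) \<and>
      measure \<mu> (nbhd (cyl a) r) \<le> C * (r powr (2*\<delta>) * f (1/r))"
    if "a \<in> E" "1 / real a \<le> r" "r < r0" for a r
  proof -
    have a: "a \<ge> 1"
      using E_pos that(1) by (cases a) auto
    then have "0 < 1 / real a"
      by simp
    then have "0 < r"
      using that(2) by linarith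
    then show ?thesis
      using nbhd_cyl_between[OF a that(2)] that(3)
      by (intro bounds) (auto simp: nbhd_def intro!: borel_open open_UN)
  qed
  show ?thesis
    using pos ball nbhd by blast
qed

end
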